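(* Let $f:[0,1]\to[0,1]$ be a continuous map such that $f$ is increasing on $[0,1/2]$ and decreasing on $[1/2,1]$. Suppose $f$ has a periodic orbit of least period $\ge 2$. Then the periodic orbits of $f$ of least periods $\ge 2$ are nested in the following sense: if $P$ and $Q$ are periodic orbits of $f$ of least periods $\ge 2$ with $\max P<\max Q$, then $[\min P,\max P]\subset[\min Q,\max Q]$.
   Context: For $n\ge1$, $f^n$ denotes the $n$-th iterate of $f$. A point $x_0$ is a periodic point of least period $k$ if $f^k(x_0)=x_0$ and $f^i(x_0)\neq x_0$ for $0<i<k$; its orbit $\{x_0,f(x_0),f^2(x_0),\dots\}$ is then a periodic orbit of least period $k$. *)

theory Defs
  imports Complex_Main
begin

definition least_period :: "(real \<Rightarrow> real) \<Rightarrow> real \<Rightarrow> nat \<Rightarrow> bool" where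
  "least_period f x k \<longleftrightarrow> k \<ge> 1 \<and> (f ^^ k) x = x \<and> (\<forall>i. 0 < i \<and> i < k \<longrightarrow> (f ^^ i) x \<noteq> x)"

definition orbit :: "(real \<Rightarrow> real) \<Rightarrow> real \<Rightarrow> real set" where
  "orbit f x = {(f ^^ n) x | n. True}"

definition periodic_orbit :: "(real \<Rightarrow> real) \<Rightarrow> real set \<Rightarrow> nat \<Rightarrow> bool" where
  "periodic_orbit f P k \<longleftrightarrow> (\<exists>x \<in> {0..1}. least_period f x k \<and> P = orbit f x)"

end

theory Submission
  imports Defs
begin

text \<open>
  On a periodic orbit \<open>P\<close> without fixed points, the minimum \<open>m\<close> has a preimage \<open>z \<in> P\<close>
  and \<open>f m > m\<close>. If \<open>z\<close> were on the increasing branch we would get \<open>f m \<le> f z = m\<close>; so \<open>z\<close> lies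
  on the decreasing branch, hence so does \<open>max P \<ge> z\<close>, and \<open>f (max P) \<le> f z = min P\<close> forces
  \<open>f (max P) = min P\<close>. For two such orbits with \<open>max P < max Q\<close>, monotonicity on the decreasing
  branch gives \<open>min Q = f (max Q) \<le> f (max P) = min P\<close>, and equality is impossible because
  periodic orbits sharing a point coincide.
\<close>

lemma self_in_orbit: "x \<in> orbit f x"
  unfolding orbit_def by (auto intro: exI[of _ 0])

lemma orbit_closed: "y \<in> orbit f x \<Longrightarrow> f y \<in> orbit f x"
  unfolding orbit_def by (auto intro: exI[of _ "Suc _"])

lemma orbit_subset_orbit:
  assumes "y \<in> orbit f x"
  shows "orbit f y \<subseteq> orbit f x"
proof
  fix z assume "z \<in> orbit f y"
  then obtain i j where "y = (f ^^ j) x" "z = (f ^^ i) y"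
    using assms unfolding orbit_def by auto
  then have "z = (f ^^ (i + j)) x" by (simp add: funpow_add)
  then show "z \<in> orbit f x" unfolding orbit_def by blast
qed

lemma orbit_subset_invariant:
  assumes "f ` S \<subseteq> S" "x \<in> S"
  shows "orbit f x \<subseteq> S"
proof
  fix y assume "y \<in> orbit f x"
  then obtain n where "y = (f ^^ n) x" unfolding orbit_def by auto
  moreover have "(f ^^ n) x \<in> S" by (induction n) (use assms in auto)
  ultimately show "y \<in> S" by simp
qed

context
  fixes f :: "real \<Rightarrow> real" and x :: real and k :: nat
  assumes periodic: "(f ^^ k) x = x" and k_pos: "0 < k"
begin

lemma periodic_orbit_eq_image: "orbit f x = (\<lambda>n. (f ^^ n) x) ` {..<k}"
proof -
  have "(f ^^ n) x \<in> (\<lambda>n. (f ^^ n) x) ` {..<k}" for n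
    using k_pos funpow_mod_eq[OF periodic, of n] by (intro rev_image_eqI[of "n mod k"]) auto
  then show ?thesis unfolding orbit_def by auto
qed

lemma finite_periodic_orbit: "finite (orbit f x)"
  by (simp add: periodic_orbit_eq_image)

lemma periodic_orbit_image: "f ` orbit f x = orbit f x"
proof (intro equalityI subsetI)
  fix y assume "y \<in> orbit f x"
  then obtain j where j: "y = (f ^^ j) x" unfolding orbit_def by auto
  obtain m where m: "j + k = Suc m" using k_pos by (metis add_gr_0 gr0_conv_Suc)
  have "y = (f ^^ (j + k)) x" using j periodic by (simp add: funpow_add)
  also have "\<dots> = f ((f ^^ m) x)" using m by simp
  finally show "y \<in> f ` orbit f x" unfolding orbit_def by blast
qed (auto intro: orbit_closed)

lemma periodic_orbit_eq:
  assumes "y \<in> orbit f x"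
  shows "orbit f y = orbit f x"
proof
  obtain j where j: "y = (f ^^ j) x" using assms unfolding orbit_def by auto
  have "j = k * (j div k) + j mod k" "j mod k < k" using k_pos by simp_all
  then have "k - j mod k + j = k * Suc (j div k)" unfolding mult_Suc_right by linarith
  then have "(k - j mod k + j) mod k = 0" by simp
  then have "(f ^^ (k - j mod k)) y = x"
    using funpow_mod_eq[OF periodic, of "k - j mod k + j"] j by (simp add: funpow_add)
  then have "x \<in> orbit f y" unfolding orbit_def by blast
  then show "orbit f x \<subseteq> orbit f y" by (rule orbit_subset_orbit)
qed (rule orbit_subset_orbit[OF assms])

end

lemma least_period_orbit_no_fixed_point:
  assumes "least_period f x k" "k \<ge> 2" "y \<in> orbit f x"
  shows "f y \<noteq> y"
proof
  assume fy: "f y = y"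
  have "(f ^^ k) x = x" "0 < k" using assms(1) unfolding least_period_def by auto
  then have "x \<in> orbit f y" using periodic_orbit_eq[OF _ _ assms(3)] self_in_orbit by metis
  moreover have "(f ^^ n) y = y" for n by (induction n) (simp_all add: fy)
  ultimately have "x = y" unfolding orbit_def by auto
  then have "(f ^^ 1) x = x" using fy by simp
  with assms(1,2) show False unfolding least_period_def by auto
qed

lemma periodic_orbitD:
  assumes "f ` {0..1} \<subseteq> {0..1}" "periodic_orbit f R n" "n \<ge> 2"
  shows "finite R" "R \<noteq> {}" "R \<subseteq> {0..1}" "f ` R = R"
    and "\<And>y. y \<in> R \<Longrightarrow> f y \<noteq> y" "\<And>y. y \<in> R \<Longrightarrow> orbit f y = R"
proof -
  obtain x where x: "x \<in> {0..1}" "least_period f x n" "R = orbit f x"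
    using assms(2) unfolding periodic_orbit_def by auto
  then have periodic: "(f ^^ n) x = x" "0 < n" unfolding least_period_def by auto
  show "finite R" "f ` R = R" "\<And>y. y \<in> R \<Longrightarrow> orbit f y = R"
    using x(3) finite_periodic_orbit[OF periodic] periodic_orbit_image[OF periodic]
      periodic_orbit_eq[OF periodic] by simp_all
  show "R \<noteq> {}" using x(3) self_in_orbit by blast
  show "R \<subseteq> {0..1}" using x(3) orbit_subset_invariant[OF assms(1) x(1)] by simp
  show "\<And>y. y \<in> R \<Longrightarrow> f y \<noteq> y"
    using x(3) least_period_orbit_no_fixed_point[OF x(2) assms(3)] by simp
qed

lemma unimodal_cycle_max_maps_to_min:
  fixes f :: "real \<Rightarrow> real" and P :: "real set"
  assumes incr: "mono_on {a..c} f" and decr: "antimono_on {c..b} f"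
    and P: "finite P" "P \<noteq> {}" "P \<subseteq> {a..b}" "f ` P = P"
    and no_fix: "\<And>y. y \<in> P \<Longrightarrow> f y \<noteq> y"
  shows "c < Max P" "f (Max P) = Min P"
proof -
  have MinP: "Min P \<in> P" "\<And>y. y \<in> P \<Longrightarrow> Min P \<le> y"
    and MaxP: "Max P \<in> P" "\<And>y. y \<in> P \<Longrightarrow> y \<le> Max P" using P(1,2) by auto
  obtain z where z: "z \<in> P" "f z = Min P" using MinP(1) P(4) by force
  have "Min P < f (Min P)"
    using MinP P(4) no_fix[OF MinP(1)] by (metis image_eqI order_le_neq_trans)
  have "c < z"
  proof (rule ccontr)
    assume "\<not> c < z"
    then have "f (Min P) \<le> f z"
      using mono_onD[OF incr] MinP(1) MinP(2)[OF z(1)] z(1) P(3) by force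
    with z(2) \<open>Min P < f (Min P)\<close> show False by simp
  qed
  then show "c < Max P" using MaxP(2)[OF z(1)] by simp
  have "f (Max P) \<le> f z"
    using monotone_onD[OF decr] \<open>c < z\<close> MaxP z(1) P(3) by force
  then show "f (Max P) = Min P"
    using z(2) MinP(2) P(4) MaxP(1) by (metis antisym image_eqI)
qed

theorem proposition1:
  fixes f :: "real \<Rightarrow> real"
  assumes "continuous_on {0..1} f"
    and "f ` {0..1} \<subseteq> {0..1}"
    and "mono_on {0..1/2} f"
    and "antimono_on {1/2..1} f"
    and "\<exists>P k. k \<ge> 2 \<and> periodic_orbit f P k"
  shows "\<forall>P Q k l. periodic_orbit f P k \<and> k \<ge> 2 \<and> periodic_orbit f Q l \<and> l \<ge> 2
           \<and> Max P < Max Q \<longrightarrow> {Min P..Max P} \<subset> {Min Q..Max Q}"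
proof (intro allI impI)
  fix P Q k l
  assume "periodic_orbit f P k \<and> k \<ge> 2 \<and> periodic_orbit f Q l \<and> l \<ge> 2 \<and> Max P < Max Q"
  then have "periodic_orbit f P k" "k \<ge> 2" "periodic_orbit f Q l" "l \<ge> 2"
    and max_less: "Max P < Max Q" by auto
  note P = periodic_orbitD[OF assms(2) \<open>periodic_orbit f P k\<close> \<open>k \<ge> 2\<close>]
  note Q = periodic_orbitD[OF assms(2) \<open>periodic_orbit f Q l\<close> \<open>l \<ge> 2\<close>]
  note maxP = unimodal_cycle_max_maps_to_min[OF assms(3,4) P(1-5)]
  note maxQ = unimodal_cycle_max_maps_to_min[OF assms(3,4) Q(1-5)]
  have "Max Q \<le> 1" using Q(1-3) by (meson Max_in atLeastAtMost_iff subsetD)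
  then have "f (Max Q) \<le> f (Max P)"
    using monotone_onD[OF assms(4)] maxP(1) max_less by simp
  then have "Min Q \<le> Min P" using maxP(2) maxQ(2) by simp
  moreover have "Min Q \<noteq> Min P"
  proof
    assume "Min Q = Min P"
    then have "P = Q" using P(1,2,6) Q(1,2,6) by (metis Min_in)
    with max_less show False by simp
  qed
  moreover have "Min P \<le> Max P" using P(1,2) by simp
  ultimately show "{Min P..Max P} \<subset> {Min Q..Max Q}" using max_less by auto
qed

end
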